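(* Let $r>0$, $d>0$ with $d\sqrt{2}<r$, and let $X\subseteq\mathbb{R}^2$ be a bounded $r$-regular set whose boundary contains no point of $d\mathbb{Z}^2$. Consider a $3\times 3$ block of pixels of the lattice $d\mathbb{Z}^2$ whose middle pixel is grey. Then at least one of the 8 other pixels of the block is not grey.
   Context: A closed set $X\subseteq\mathbb{R}^2$ is $r$-regular if for each $x\in\partial X$ there are two open balls of radius $r$, $B_r(x_b)\subseteq X$ and $B_r(x_w)\subseteq \mathbb{R}^2\setminus X$, with $\overline{B_r(x_b)}\cap\overline{B_r(x_w)}=\{x\}$. Pixels are the closed squares $[dk,d(k+1)]\times[dl,d(l+1)]$, $k,l\in\mathbb{Z}$. A pixel $P$ is black if $\mathrm{area}(X\cap P)=d^2$, white if $\mathrm{area}(X\cap P)=0$, and grey otherwise. *)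

theory Defs
  imports "HOL-Analysis.Analysis"
begin

definition r_regular :: "real \<Rightarrow> (real \<times> real) set \<Rightarrow> bool" where
  "r_regular r X \<longleftrightarrow> closed X \<and>
     (\<forall>x\<in>frontier X. \<exists>xb xw. ball xb r \<subseteq> X \<and> ball xw r \<subseteq> - X \<and>
        closure (ball xb r) \<inter> closure (ball xw r) = {x})"

definition pixel :: "real \<Rightarrow> int \<Rightarrow> int \<Rightarrow> (real \<times> real) set" where
  "pixel d k l = {d * of_int k .. d * (of_int k + 1)} \<times> {d * of_int l .. d * (of_int l + 1)}"

definition black_pixel :: "(real \<times> real) set \<Rightarrow> real \<Rightarrow> int \<Rightarrow> int \<Rightarrow> bool" where
  "black_pixel X d k l \<longleftrightarrow> measure lebesgue (X \<inter> pixel d k l) = d\<^sup>2"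

definition white_pixel :: "(real \<times> real) set \<Rightarrow> real \<Rightarrow> int \<Rightarrow> int \<Rightarrow> bool" where
  "white_pixel X d k l \<longleftrightarrow> measure lebesgue (X \<inter> pixel d k l) = 0"

definition grey_pixel :: "(real \<times> real) set \<Rightarrow> real \<Rightarrow> int \<Rightarrow> int \<Rightarrow> bool" where
  "grey_pixel X d k l \<longleftrightarrow> \<not> black_pixel X d k l \<and> \<not> white_pixel X d k l"

end

theory Submission
  imports Defs
begin

text \<open>
  A grey pixel contains a boundary point \<open>x\<close> of \<open>X\<close>, and \<open>r\<close>-regularity gives a vector \<open>v\<close>
  with \<open>|v| = r\<close> such that \<open>B(x + v, r) \<subseteq> X\<close> and \<open>B(x - v, r)\<close> misses \<open>X\<close>.
  Let \<open>w\<close> be \<open>v\<close> rescaled to length \<open>d\<surd>2\<close>, the diameter of a pixel. The disc of radius \<open>d\<surd>2\<close>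
  about \<open>x + w\<close> is internally tangent to \<open>B(x + v, r)\<close>, so every pixel containing \<open>x + w\<close> is black;
  likewise every pixel containing \<open>x - w\<close> meets \<open>X\<close> at most in a circle and is white.
  An elementary computation shows that one of \<open>x \<plusminus> w\<close> lies in one of the eight pixels around
  the pixel of \<open>x\<close>.
\<close>

lemma parallelogram_dist:
  fixes a b x :: "'a::real_inner"
  shows "(dist x a)\<^sup>2 + (dist x b)\<^sup>2 = 2 * (dist x (midpoint a b))\<^sup>2 + (dist a b)\<^sup>2 / 2"
  unfolding dist_norm midpoint_def power2_norm_eq_inner
  by (simp add: inner_simps inner_commute[of b a] field_simps)

lemma eq_midpoint_if_dist_le:
  fixes a b x :: "'a::real_inner"
  assumes "dist x a \<le> r" "dist x b \<le> r" "2 * r \<le> dist a b"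
  shows "x = midpoint a b"
proof -
  have "0 \<le> r" using assms(1) zero_le_dist order_trans by blast
  have "(dist x a)\<^sup>2 \<le> r\<^sup>2" "(dist x b)\<^sup>2 \<le> r\<^sup>2"
    using assms by (simp_all add: power_mono)
  moreover have "(2 * r)\<^sup>2 \<le> (dist a b)\<^sup>2"
    using assms(3) \<open>0 \<le> r\<close> by (intro power_mono) simp_all
  ultimately have "(dist x a)\<^sup>2 + (dist x b)\<^sup>2 \<le> (dist a b)\<^sup>2 / 2"
    by (simp add: power_mult_distrib)
  then have "(dist x (midpoint a b))\<^sup>2 \<le> 0"
    using parallelogram_dist[of x a b] by linarith
  then show ?thesis by simp
qed

lemma cball_subset_cball_along_radius:
  fixes x v :: "'a::euclidean_space"
  assumes "norm v = r" "0 \<le> \<rho>" "\<rho> \<le> r"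
  shows "cball (x + (\<rho> / r) *\<^sub>R v) \<rho> \<subseteq> cball (x + v) r"
proof (cases "r = 0")
  case True
  then show ?thesis using assms by simp
next
  case False
  then have "r > 0" using assms by simp
  have "dist (x + (\<rho> / r) *\<^sub>R v) (x + v) = norm ((1 - \<rho> / r) *\<^sub>R v)"
    by (simp add: dist_norm norm_minus_commute algebra_simps)
  also have "\<dots> = r - \<rho>"
    using assms \<open>r > 0\<close> by (simp add: field_simps)
  finally show ?thesis by (simp add: cball_subset_cball_iff)
qed

lemma r_regular_tangent_balls:
  assumes "r_regular r X" "r > 0" "x \<in> frontier X"
  obtains v where "norm v = r" "cball (x + v) r \<subseteq> X" "ball (x - v) r \<subseteq> - X"
proof -
  obtain b w where bX: "ball b r \<subseteq> X" and wX: "ball w r \<subseteq> - X"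
    and touch: "cball b r \<inter> cball w r = {x}"
    using assms unfolding r_regular_def by (metis closure_ball)
  have "cball b r \<subseteq> X"
    using assms closure_minimal[OF bX] unfolding r_regular_def by (simp add: closure_ball)
  have far: "2 * r \<le> dist b w"
  proof (rule ccontr)
    assume "\<not> 2 * r \<le> dist b w"
    then have "midpoint b w \<in> ball b r \<inter> ball w r" by (simp add: dist_midpoint)
    with bX wX show False by blast
  qed
  then have x: "x = midpoint b w"
    using touch by (intro eq_midpoint_if_dist_le) (auto simp: dist_commute)
  have "dist b x \<le> r"
    using touch by auto
  moreover have "dist b x = dist b w / 2"
    by (simp add: x dist_midpoint)
  ultimately have "norm (b - x) = r"
    using far by (simp add: dist_norm)
  moreover have "x - (b - x) = w"
  proof -
    have "b + w = x + x"
      using x by (simp add: midpoint_eq_iff)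
    then show ?thesis
      by (metis add_diff_cancel_left' diff_diff_eq2)
  qed
  ultimately show thesis
    using that[of "b - x"] \<open>cball b r \<subseteq> X\<close> wX by simp
qed

lemma pixel_eq_cbox:
  "pixel d k l = cbox (d * of_int k, d * of_int l) (d * (of_int k + 1), d * (of_int l + 1))"
  unfolding pixel_def by (simp add: cbox_Pair_eq)

lemma measure_pixel:
  assumes "d \<ge> 0"
  shows "measure lebesgue (pixel d k l) = d\<^sup>2"
  using assms unfolding pixel_eq_cbox
  by (simp add: content_Pair power2_eq_square algebra_simps flip: measure_lborel_cbox_eq)

lemma pixel_subset_cball:
  assumes "d \<ge> 0" "c \<in> pixel d k l"
  shows "pixel d k l \<subseteq> cball c (sqrt 2 * d)"
proof
  fix z assume "z \<in> pixel d k l"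
  with assms have "\<bar>fst c - fst z\<bar> \<le> d" "\<bar>snd c - snd z\<bar> \<le> d"
    by (auto simp: pixel_def mem_Times_iff algebra_simps)
  then have "(fst c - fst z)\<^sup>2 + (snd c - snd z)\<^sup>2 \<le> (sqrt 2 * d)\<^sup>2"
    using assms(1) abs_le_square_iff[of _ d] by (simp add: power_mult_distrib)
  then have "dist c z \<le> \<bar>sqrt 2 * d\<bar>"
    using real_sqrt_le_mono by (fastforce simp: dist_prod_def dist_real_def)
  then show "z \<in> cball c (sqrt 2 * d)"
    using assms(1) by simp
qed

lemma pixel_translate:
  "z + (d * of_int k, d * of_int l) \<in> pixel d (k + i) (l + j) \<longleftrightarrow> z \<in> pixel d i j"
  by (cases z) (auto simp: pixel_def algebra_simps)

lemma black_pixel_if_subset: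
  assumes "d \<ge> 0" "pixel d k l \<subseteq> X"
  shows "black_pixel X d k l"
  using assms by (simp add: black_pixel_def measure_pixel Int_absorb1)

lemma white_pixel_if_negligible:
  "negligible (X \<inter> pixel d k l) \<Longrightarrow> white_pixel X d k l"
  by (simp add: white_pixel_def negligible_imp_measure0)

lemma grey_pixel_meets_frontier:
  assumes "d \<ge> 0" "grey_pixel X d k l"
  obtains x where "x \<in> pixel d k l" "x \<in> frontier X"
proof -
  have "pixel d k l \<inter> X \<noteq> {}"
    using assms(2) by (auto simp: grey_pixel_def white_pixel_def Int_commute)
  moreover have "pixel d k l - X \<noteq> {}"
    using assms black_pixel_if_subset by (auto simp: grey_pixel_def)
  moreover have "connected (pixel d k l)"
    by (simp add: pixel_eq_cbox is_interval_connected is_interval_cbox)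
  ultimately show thesis
    using connected_Int_frontier that by blast
qed

lemma black_pixel_near_inner_ball:
  fixes x v :: "real \<times> real"
  assumes "d \<ge> 0" "norm v = r" "sqrt 2 * d \<le> r" "cball (x + v) r \<subseteq> X"
    and "x + (sqrt 2 * d / r) *\<^sub>R v \<in> pixel d k l"
  shows "black_pixel X d k l"
proof -
  have "0 \<le> sqrt 2 * d"
    using assms(1) by simp
  from pixel_subset_cball[OF assms(1,5)] cball_subset_cball_along_radius[OF assms(2) this assms(3)]
  have "pixel d k l \<subseteq> cball (x + v) r"
    by (rule subset_trans)
  then have "pixel d k l \<subseteq> X"
    using assms(4) by (rule subset_trans)
  then show ?thesis
    by (rule black_pixel_if_subset[OF assms(1)])
qed

lemma white_pixel_near_outer_ball:
  fixes x v :: "real \<times> real"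
  assumes "d \<ge> 0" "norm v = r" "sqrt 2 * d \<le> r" "ball (x + v) r \<subseteq> - X"
    and "x + (sqrt 2 * d / r) *\<^sub>R v \<in> pixel d k l"
  shows "white_pixel X d k l"
proof -
  have "0 \<le> sqrt 2 * d"
    using assms(1) by simp
  from pixel_subset_cball[OF assms(1,5)] cball_subset_cball_along_radius[OF assms(2) this assms(3)]
  have "pixel d k l \<subseteq> cball (x + v) r"
    by (rule subset_trans)
  then have "X \<inter> pixel d k l \<subseteq> sphere (x + v) r"
    unfolding cball_diff_eq_sphere[symmetric] using assms(4) by blast
  then show ?thesis
    by (intro white_pixel_if_negligible negligible_subset[OF negligible_sphere])
qed

lemma opposite_shift_in_range:
  fixes d p t :: real
  assumes "0 \<le> p" "p \<le> d" "\<bar>t\<bar> \<le> 3/2 * d" "\<not> (- d \<le> p + t \<and> p + t \<le> 2 * d)"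
  shows "- d \<le> p - t \<and> p - t \<le> 2 * d \<and> d < \<bar>t\<bar>"
  using assms by arith

lemma shift_or_opposite_in_block:
  fixes d p q s t :: real
  assumes "0 \<le> p" "p \<le> d" "0 \<le> q" "q \<le> d" "s\<^sup>2 + t\<^sup>2 = 2 * d\<^sup>2"
  shows "(p + s, q + t) \<in> {-d..2*d} \<times> {-d..2*d} \<or> (p - s, q - t) \<in> {-d..2*d} \<times> {-d..2*d}"
proof -
  have "0 \<le> d" using assms(1,2) by linarith
  have "(3/2 * d)\<^sup>2 = 9/4 * d\<^sup>2"
    by (simp add: power_mult_distrib power_divide)
  then have "s\<^sup>2 \<le> (3/2 * d)\<^sup>2" "t\<^sup>2 \<le> (3/2 * d)\<^sup>2"
    using assms(5) zero_le_power2[of s] zero_le_power2[of t] zero_le_power2[of d] by linarith+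
  then have bound: "\<bar>s\<bar> \<le> 3/2 * d" "\<bar>t\<bar> \<le> 3/2 * d"
    using \<open>0 \<le> d\<close> by (simp_all add: power2_le_iff_abs_le)
  have other_small: "\<bar>b\<bar> < d" if "a\<^sup>2 + b\<^sup>2 = 2 * d\<^sup>2" "d < \<bar>a\<bar>" for a b :: real
  proof -
    have "d\<^sup>2 < a\<^sup>2"
      using that(2) \<open>0 \<le> d\<close> power2_strict_mono[of d a] by simp
    then have "\<bar>b\<bar>\<^sup>2 < d\<^sup>2"
      using that(1) by simp
    then show ?thesis
      using \<open>0 \<le> d\<close> by (rule power_less_imp_less_base)
  qed
  have swap: "d < \<bar>s\<bar> \<Longrightarrow> \<bar>t\<bar> < d" "d < \<bar>t\<bar> \<Longrightarrow> \<bar>s\<bar> < d"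
    using other_small[of s t] other_small[of t s] assms(5) by (simp_all add: add.commute)
  have "(p - s, q - t) \<in> {-d..2*d} \<times> {-d..2*d}" if "(p + s, q + t) \<notin> {-d..2*d} \<times> {-d..2*d}"
  proof -
    from that consider "\<not> (- d \<le> p + s \<and> p + s \<le> 2 * d)" | "\<not> (- d \<le> q + t \<and> q + t \<le> 2 * d)"
      by (simp only: mem_Times_iff fst_conv snd_conv atLeastAtMost_iff) blast
    then show ?thesis
    proof cases
      case 1
      from opposite_shift_in_range[OF assms(1,2) bound(1) this] swap(1) assms(3,4)
      show ?thesis by (simp add: abs_less_iff)
    next
      case 2
      from opposite_shift_in_range[OF assms(3,4) bound(2) this] swap(2) assms(1,2)
      show ?thesis by (simp add: abs_less_iff)
    qed
  qed
  then show ?thesis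
    by blast
qed

lemma shift_outside_open_pixel:
  fixes d p q s t :: real
  assumes "0 \<le> p" "p \<le> d" "0 \<le> q" "q \<le> d" "s\<^sup>2 + t\<^sup>2 = 2 * d\<^sup>2"
  shows "(p + s, q + t) \<notin> {0<..<d} \<times> {0<..<d}"
proof
  assume "(p + s, q + t) \<in> {0<..<d} \<times> {0<..<d}"
  then have "0 < p + s" "p + s < d" "0 < q + t" "q + t < d"
    by simp_all
  then have "\<bar>s\<bar> < \<bar>d\<bar>" "\<bar>t\<bar> < \<bar>d\<bar>"
    using assms(1-4) by arith+
  then have "s\<^sup>2 < d\<^sup>2" "t\<^sup>2 < d\<^sup>2"
    by (simp_all add: power2_strict_mono)
  with assms(5) show False by linarith
qed

lemma neighbour_pixel_if_in_block:
  fixes d :: real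
  assumes "z \<in> {-d..2*d} \<times> {-d..2*d}" "z \<notin> {0<..<d} \<times> {0<..<d}"
  obtains i j :: int where "i \<in> {-1, 0, 1}" "j \<in> {-1, 0, 1}" "(i, j) \<noteq> (0, 0)" "z \<in> pixel d i j"
proof -
  define index :: "real \<Rightarrow> int" where "index a = (if a \<le> 0 then -1 else if a < d then 0 else 1)" for a
  have index_range: "index a \<in> {-1, 0, 1}" for a
    by (simp add: index_def)
  have index_bounds: "d * of_int (index a) \<le> a \<and> a \<le> d * (of_int (index a) + 1)" if "a \<in> {-d..2*d}" for a
    using that by (simp add: index_def)
  have "index a = 0 \<longleftrightarrow> a \<in> {0<..<d}" for a
    by (simp add: index_def)
  then have "(index (fst z), index (snd z)) \<noteq> (0, 0)"
    using assms(2) by (auto simp: mem_Times_iff)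
  moreover have "z \<in> pixel d (index (fst z)) (index (snd z))"
    using assms(1) index_bounds by (auto simp: pixel_def mem_Times_iff)
  ultimately show thesis
    using that index_range by blast
qed

lemma long_shift_from_origin_pixel:
  fixes y w :: "real \<times> real"
  assumes "y \<in> pixel d 0 0" "norm w = sqrt 2 * d"
  obtains u i j where "u \<in> {w, -w}" "i \<in> {-1, 0, 1}" "j \<in> {-1, 0, 1}" "(i, j) \<noteq> (0, 0)"
    "y + u \<in> pixel d i j"
proof -
  have y: "0 \<le> fst y" "fst y \<le> d" "0 \<le> snd y" "snd y \<le> d"
    using assms(1) by (simp_all add: pixel_def mem_Times_iff)
  have sum_sq: "(fst u)\<^sup>2 + (snd u)\<^sup>2 = 2 * d\<^sup>2" if "u \<in> {w, -w}" for u
  proof -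
    have "(norm u)\<^sup>2 = 2 * d\<^sup>2"
      using that assms(2) by (auto simp: power_mult_distrib)
    then show ?thesis
      by (simp add: norm_prod_def)
  qed
  have pair: "y + v = (fst y + fst v, snd y + snd v)" for v
    by (simp add: prod_eq_iff)
  have "y + w \<in> {-d..2*d} \<times> {-d..2*d} \<or> y + - w \<in> {-d..2*d} \<times> {-d..2*d}"
    using shift_or_opposite_in_block[OF y sum_sq[OF insertI1]]
    by (simp only: pair fst_uminus snd_uminus diff_conv_add_uminus)
  then obtain u where u: "u \<in> {w, -w}" "y + u \<in> {-d..2*d} \<times> {-d..2*d}"
  proof
    assume "y + w \<in> {-d..2*d} \<times> {-d..2*d}"
    then show thesis using that[of w] by simp
  next
    assume "y + - w \<in> {-d..2*d} \<times> {-d..2*d}"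
    then show thesis using that[of "- w"] by simp
  qed
  have "y + u \<notin> {0<..<d} \<times> {0<..<d}"
    using shift_outside_open_pixel[OF y sum_sq[OF u(1)]] unfolding pair .
  with u(2) obtain i j where "i \<in> {-1, 0, 1}" "j \<in> {-1, 0, 1}" "(i, j) \<noteq> (0, 0)" "y + u \<in> pixel d i j"
    by (rule neighbour_pixel_if_in_block)
  then show thesis
    using that u(1) by blast
qed

lemma long_shift_hits_neighbour_pixel:
  fixes x w :: "real \<times> real"
  assumes "x \<in> pixel d k l" "norm w = sqrt 2 * d"
  obtains u i j where "u \<in> {w, -w}" "i \<in> {-1, 0, 1}" "j \<in> {-1, 0, 1}" "(i, j) \<noteq> (0, 0)"
    "x + u \<in> pixel d (k + i) (l + j)"
proof -
  define y where "y = x - (d * of_int k, d * of_int l)"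
  have shift: "y + u + (d * of_int k, d * of_int l) = x + u" for u
    by (simp add: y_def)
  have "y \<in> pixel d 0 0"
    using assms(1) pixel_translate[of y d k l 0 0] shift[of 0] by simp
  then obtain u i j where u: "u \<in> {w, -w}" and ij: "i \<in> {-1, 0, 1}" "j \<in> {-1, 0, 1}" "(i, j) \<noteq> (0, 0)"
    and "y + u \<in> pixel d i j"
    by (rule long_shift_from_origin_pixel[OF _ assms(2)])
  then have "x + u \<in> pixel d (k + i) (l + j)"
    using pixel_translate[of "y + u" d k l i j] shift[of u] by simp
  then show thesis
    by (rule that[OF u ij])
qed

theorem lemma3p4:
  fixes r d :: real and X :: "(real \<times> real) set" and k l :: int
  assumes "r > 0" and "d > 0" and "d * sqrt 2 < r"
    and "bounded X" and "r_regular r X"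
    and "\<forall>i j :: int. (d * of_int i, d * of_int j) \<notin> frontier X"
    and "grey_pixel X d k l"
  shows "\<exists>i j :: int. i \<in> {-1, 0, 1} \<and> j \<in> {-1, 0, 1} \<and> (i, j) \<noteq> (0, 0) \<and>
           \<not> grey_pixel X d (k + i) (l + j)"
proof -
  have "0 \<le> d" "sqrt 2 * d \<le> r"
    using assms(2,3) by (simp_all add: mult.commute)
  obtain x where x: "x \<in> pixel d k l" "x \<in> frontier X"
    by (rule grey_pixel_meets_frontier[OF \<open>0 \<le> d\<close> assms(7)])
  obtain v where v: "norm v = r" "cball (x + v) r \<subseteq> X" "ball (x - v) r \<subseteq> - X"
    by (rule r_regular_tangent_balls[OF assms(5,1) x(2)])
  define w where "w = (sqrt 2 * d / r) *\<^sub>R v"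
  have "norm w = sqrt 2 * d"
    using v(1) assms(1,2) by (simp add: w_def)
  then obtain u i j where u: "u \<in> {w, -w}" and ij: "i \<in> {-1, 0, 1}" "j \<in> {-1, 0, 1}" "(i, j) \<noteq> (0, 0)"
    and Q: "x + u \<in> pixel d (k + i) (l + j)"
    by (rule long_shift_hits_neighbour_pixel[OF x(1)])
  have "black_pixel X d (k + i) (l + j) \<or> white_pixel X d (k + i) (l + j)"
  proof (cases "u = w")
    case True
    then show ?thesis
      using black_pixel_near_inner_ball[OF \<open>0 \<le> d\<close> v(1) \<open>sqrt 2 * d \<le> r\<close> v(2)] Q by (simp add: w_def)
  next
    case False
    then have "x + u = x + (sqrt 2 * d / r) *\<^sub>R (- v)"
      using u by (simp add: w_def)
    then show ?thesis
      using white_pixel_near_outer_ball[of d "- v" r x X] v(1,3) \<open>0 \<le> d\<close> \<open>sqrt 2 * d \<le> r\<close> Q by simp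
  qed
  then show ?thesis
    using ij unfolding grey_pixel_def by blast
qed

end
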